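(* Fix $0<\alpha<1$ and $\kappa>0$, and let $\mathbb{W}^*$ be the maximizer $$\mathbb{W}^* = \arg\max_{W'} \sup_{\mathcal{P}_0\in\mathcal{A}} E_{\mathcal{P}_0}^{(s,b),t_0^-}\Big[\sum_{i=0}^M \mathfrak{q}_i + \kappa\Big(W' + \tfrac{1}{\alpha}\min(W_T-W',0)\Big) + \epsilon W_T\Big].$$ Then: (i) A (pre-commitment) control $\mathcal{P}^*_0$ which solves $\text{EW-ES}_{t_0}(\alpha,\kappa)$ is a solution to $\text{EW-LS}_{t_0}(\mathbb{W}^*,\kappa/\alpha)$ (i.e. with the fixed wealth level $\mathbb{W}=\mathbb{W}^*$ and $\hat\kappa=\kappa/\alpha$). (ii) Conversely, an optimal control for $\text{EW-LS}_{t_0}(\mathbb{W}^*,\kappa/\alpha)$ solves $\text{EW-ES}_{t_0}(\alpha,\kappa)$.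
   Context: Decumulation problem on horizon $[0,T]$. Two assets: a stock index and a bond index; $S_t$, $B_t$ denote the real amounts invested, $W_t=S_t+B_t$. Between rebalancing times they evolve without control as jump diffusions $\frac{dS_t}{S_{t^-}}=(\mu^s-\lambda^s\gamma^s)dt+\sigma^s dZ^s+d\big(\sum_{i=1}^{\pi^s_t}(\xi^s_i-1)\big)$, $\frac{dB_t}{B_{t^-}}=(\mu^b-\lambda^b\gamma^b+\mu^b_c\mathbf 1_{\{B_{t^-}<0\}})dt+\sigma^b dZ^b+d\big(\sum_{i=1}^{\pi^b_t}(\xi^b_i-1)\big)$, where $\pi^s,\pi^b$ are Poisson processes with intensities $\lambda^s,\lambda^b$, $\log\xi^{s},\log\xi^b$ are i.i.d. double-exponential jump sizes, $\gamma^{s}=E[\xi^s-1]$, $\gamma^b=E[\xi^b-1]$, $dZ^s dZ^b=\rho_{sb}dt$, and the jump processes are independent of each other and of the Brownian motions. Rebalancing times $t_0=0<t_1<\dots<t_M=T$, equally spaced. At each $t_i$ the investor withdraws $\mathfrak{q}_i$, so $W(t_i^+)=W(t_i^-)-\mathfrak{q}_i$, then sets $S(t_i^+)=\mathfrak{p}_iW(t_i^+)$, $B(t_i^+)=(1-\mathfrak{p}_i)W(t_i^+)$. Controls $(\mathfrak{q}_i,\mathfrak{p}_i)$ are feedback functions of the state $(S(t_i^-),B(t_i^-))$ and $t_i$. Admissibility: for $i<M$, $\mathfrak{q}_i\in[\mathfrak{q}_{\min},\mathfrak{q}_{\max}]$ if $W_i^-\ge\mathfrak{q}_{\max}$ and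 $\mathfrak{q}_i\in[\mathfrak{q}_{\min},\max(\mathfrak{q}_{\min},W_i^-)]$ if $W_i^-<\mathfrak{q}_{\max}$; $\mathfrak{q}_M=0$; $\mathfrak{p}_i\in[0,1]$ if $W_i^+>0$ and $i<M$, $\mathfrak{p}_i=0$ if $W_i^+\le 0$ or $i=M$. $\mathcal{A}$ is the set of admissible controls $\mathcal{P}_0=\{(\mathfrak{q}_i,\mathfrak{p}_i)\}_{i=0}^M$. $E_{\mathcal{P}_0}^{(s,b),t_0^-}$ is expectation under control $\mathcal{P}_0$ given initial state $(S(t_0^-),B(t_0^-))=(s,b)$; $W_T$ is terminal wealth; $\epsilon$ is a fixed real stabilization constant. $\text{EW-LS}_{t_0}(\mathbb{W},\hat\kappa)$, for $\mathbb{W}\in\mathbb{R}$, $\hat\kappa>0$: $\sup_{\mathcal{P}_0\in\mathcal{A}} E_{\mathcal{P}_0}^{(s,b),t_0^-}\big[\sum_{i=0}^M\mathfrak{q}_i+\hat\kappa\min(W_T-\mathbb{W},0)+\epsilon W_T\big]$. $\text{EW-ES}_{t_0}(\alpha,\kappa)$, for $0<\alpha<1$, $\kappa>0$: $\sup_{\mathcal{P}_0\in\mathcal{A}} E_{\mathcal{P}_0}^{(s,b),t_0^-}\big[\sum_{i=0}^M\mathfrak{q}_i+\kappa\sup_{W'}\big(W'+\tfrac1\alpha\min(W_T-W',0)\big)+\epsilon W_T\big]$, which by interchanging suprema equals $\sup_{W'}\sup_{\mathcal{P}_0\in\mathcal{A}}E[\cdots]$ with the inner $\sup_{W'}$ removed.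 The maximizer $\mathbb{W}^*$ above is assumed to exist. *)

theory Defs
  imports "HOL-Probability.Probability"
begin

(* Abstract rendering of the decumulation model.
   'c : admissible controls P_0 (the set A :: 'c set)
   M  : underlying probability space (scenarios 'w), under the given initial state (s,b) at t_0^-
   q c i w : withdrawal q_i at rebalancing time t_i under control c in scenario w
   WT c w  : terminal wealth W_T under control c in scenario w
   Mn      : index of the last rebalancing time t_M = T *)

definition EW_LS_obj ::
  "'w measure \<Rightarrow> ('c \<Rightarrow> nat \<Rightarrow> 'w \<Rightarrow> real) \<Rightarrow> nat \<Rightarrow> ('c \<Rightarrow> 'w \<Rightarrow> real)
   \<Rightarrow> real \<Rightarrow> real \<Rightarrow> real \<Rightarrow> 'c \<Rightarrow> real" where
  "EW_LS_obj M q Mn WT eps WW kh c =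
     (\<integral>w. (\<Sum>i\<le>Mn. q c i w) + kh * min (WT c w - WW) 0 + eps * WT c w \<partial>M)"

definition EW_ES_J ::
  "'w measure \<Rightarrow> ('c \<Rightarrow> nat \<Rightarrow> 'w \<Rightarrow> real) \<Rightarrow> nat \<Rightarrow> ('c \<Rightarrow> 'w \<Rightarrow> real)
   \<Rightarrow> real \<Rightarrow> real \<Rightarrow> real \<Rightarrow> 'c \<Rightarrow> real \<Rightarrow> real" where
  "EW_ES_J M q Mn WT eps alpha kappa c W' =
     (\<integral>w. (\<Sum>i\<le>Mn. q c i w) + kappa * (W' + (1 / alpha) * min (WT c w - W') 0)
          + eps * WT c w \<partial>M)"

(* EW-ES objective of a control: sup over W' of the expectation (interchanged form) *)
definition EW_ES_obj ::
  "'w measure \<Rightarrow> ('c \<Rightarrow> nat \<Rightarrow> 'w \<Rightarrow> real) \<Rightarrow> nat \<Rightarrow> ('c \<Rightarrow> 'w \<Rightarrow> real)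
   \<Rightarrow> real \<Rightarrow> real \<Rightarrow> real \<Rightarrow> 'c \<Rightarrow> ereal" where
  "EW_ES_obj M q Mn WT eps alpha kappa c =
     (SUP W'. ereal (EW_ES_J M q Mn WT eps alpha kappa c W'))"

definition EW_ES_value_at ::
  "'c set \<Rightarrow> 'w measure \<Rightarrow> ('c \<Rightarrow> nat \<Rightarrow> 'w \<Rightarrow> real) \<Rightarrow> nat \<Rightarrow> ('c \<Rightarrow> 'w \<Rightarrow> real)
   \<Rightarrow> real \<Rightarrow> real \<Rightarrow> real \<Rightarrow> real \<Rightarrow> ereal" where
  "EW_ES_value_at A M q Mn WT eps alpha kappa W' =
     (SUP c\<in>A. ereal (EW_ES_J M q Mn WT eps alpha kappa c W'))"

definition solves_EW_LS ::
  "'c set \<Rightarrow> 'w measure \<Rightarrow> ('c \<Rightarrow> nat \<Rightarrow> 'w \<Rightarrow> real) \<Rightarrow> nat \<Rightarrow> ('c \<Rightarrow> 'w \<Rightarrow> real)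
   \<Rightarrow> real \<Rightarrow> real \<Rightarrow> real \<Rightarrow> 'c \<Rightarrow> bool" where
  "solves_EW_LS A M q Mn WT eps WW kh c \<longleftrightarrow>
     c \<in> A \<and> (\<forall>c'\<in>A. EW_LS_obj M q Mn WT eps WW kh c' \<le> EW_LS_obj M q Mn WT eps WW kh c)"

definition solves_EW_ES ::
  "'c set \<Rightarrow> 'w measure \<Rightarrow> ('c \<Rightarrow> nat \<Rightarrow> 'w \<Rightarrow> real) \<Rightarrow> nat \<Rightarrow> ('c \<Rightarrow> 'w \<Rightarrow> real)
   \<Rightarrow> real \<Rightarrow> real \<Rightarrow> real \<Rightarrow> 'c \<Rightarrow> bool" where
  "solves_EW_ES A M q Mn WT eps alpha kappa c \<longleftrightarrow>
     c \<in> A \<and> (\<forall>c'\<in>A. EW_ES_obj M q Mn WT eps alpha kappa c' \<le> EW_ES_obj M q Mn WT eps alpha kappa c)"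

end

theory Submission
  imports Defs "HOL-Real_Asymp.Real_Asymp"
begin

(* Up to the constant kappa W', the EW-ES expectation at level W' is the EW-LS objective at level
   W' with weight kappa/alpha. Both EW-ES and "sup over W' of the value at W'" are the same double
   supremum, taken in the two orders. An EW-ES optimal control attains its own supremum over W'
   somewhere (for alpha < 1 the expectation tends to -\<infinity> as W' \<rightarrow> \<plusminus>\<infinity>), and at that point it
   realises the double supremum, so by uniqueness of the maximiser W* the point is W* and the
   control is EW-LS optimal there. Conversely, an EW-LS optimal control at W* realises the double
   supremum and is therefore EW-ES optimal. *)

lemma maximizer_of_SUP_maximizes_at_unique_peak:
  fixes f :: "'c \<Rightarrow> 'x \<Rightarrow> 'a::complete_lattice"
  assumes "Q \<in> A"
    and Q_max: "\<And>c. c \<in> A \<Longrightarrow> (SUP x. f c x) \<le> (SUP x. f Q x)"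
    and Q_attains: "\<And>x. f Q x \<le> f Q x0"
    and peak_max: "\<And>x. (SUP c\<in>A. f c x) \<le> (SUP c\<in>A. f c xs)"
    and peak_unique: "\<And>x. (SUP c\<in>A. f c x) = (SUP c\<in>A. f c xs) \<Longrightarrow> x = xs"
    and "c \<in> A"
  shows "f c xs \<le> f Q xs"
proof -
  have SUP_Q: "(SUP x. f Q x) = f Q x0"
    using Q_attains by (simp add: antisym SUP_least SUP_upper)
  have peak_le: "(SUP c\<in>A. f c xs) \<le> f Q x0"
  proof (rule SUP_least)
    fix c assume "c \<in> A"
    then have "f c xs \<le> (SUP x. f Q x)"
      using Q_max order_trans SUP_upper by (metis UNIV_I)
    then show "f c xs \<le> f Q x0" by (simp add: SUP_Q)
  qed
  also have "\<dots> \<le> (SUP c\<in>A. f c x0)"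
    using \<open>Q \<in> A\<close> by (rule SUP_upper)
  finally have "x0 = xs"
    using peak_max by (intro peak_unique antisym) auto
  have "f c xs \<le> (SUP c\<in>A. f c xs)"
    using \<open>c \<in> A\<close> by (rule SUP_upper)
  with peak_le \<open>x0 = xs\<close> show ?thesis by simp
qed

lemma maximizer_at_peak_maximizes_SUP:
  fixes f :: "'c \<Rightarrow> 'x \<Rightarrow> 'a::complete_lattice"
  assumes Q_max: "\<And>c. c \<in> A \<Longrightarrow> f c xs \<le> f Q xs"
    and peak_max: "\<And>x. (SUP c\<in>A. f c x) \<le> (SUP c\<in>A. f c xs)"
    and "c \<in> A"
  shows "(SUP x. f c x) \<le> (SUP x. f Q x)"
proof -
  have "(SUP x. f c x) \<le> (SUP c\<in>A. f c xs)"
  proof (rule SUP_least)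
    fix x
    have "f c x \<le> (SUP c\<in>A. f c x)" using \<open>c \<in> A\<close> by (rule SUP_upper)
    also have "\<dots> \<le> (SUP c\<in>A. f c xs)" by (rule peak_max)
    finally show "f c x \<le> (SUP c\<in>A. f c xs)" .
  qed
  also have "\<dots> \<le> f Q xs" using Q_max by (rule SUP_least)
  also have "\<dots> \<le> (SUP x. f Q x)" by (rule SUP_upper) simp
  finally show ?thesis .
qed

lemma continuous_attains_sup_at_bot_at_top:
  fixes f :: "real \<Rightarrow> real"
  assumes cont: "continuous_on UNIV f"
    and top: "filterlim f at_bot at_top" and bot: "filterlim f at_bot at_bot"
  shows "\<exists>x0. \<forall>x. f x \<le> f x0"
proof -
  obtain hi where hi: "\<And>x. hi \<le> x \<Longrightarrow> f x \<le> f 0"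
    using top unfolding filterlim_at_bot eventually_at_top_linorder by blast
  obtain lo where lo: "\<And>x. x \<le> lo \<Longrightarrow> f x \<le> f 0"
    using bot unfolding filterlim_at_bot eventually_at_bot_linorder by blast
  define I where "I = {min lo 0 .. max hi 0}"
  have "0 \<in> I" by (simp add: I_def)
  then obtain x0 where "x0 \<in> I" and x0: "\<And>x. x \<in> I \<Longrightarrow> f x \<le> f x0"
    using continuous_attains_sup[OF _ _ continuous_on_subset[OF cont]]
    unfolding I_def by (metis compact_Icc empty_iff subset_UNIV)
  have "f x \<le> f x0" for x
  proof (cases "x \<in> I")
    case False
    then have "f x \<le> f 0" using hi lo by (force simp: I_def)
    also have "\<dots> \<le> f x0" using \<open>0 \<in> I\<close> by (rule x0)
    finally show ?thesis .
  qed (rule x0)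
  then show ?thesis by blast
qed

lemma affine_plus_shortfall_attains_sup:
  fixes m :: "real \<Rightarrow> real"
  assumes cont: "continuous_on UNIV m"
    and nonpos: "\<forall>w. m w \<le> 0" and below_shift: "\<forall>w. m w \<le> E - w"
    and "0 < k" "k < k'"
  shows "\<exists>w0. \<forall>w. C + k * w + k' * m w \<le> C + k * w0 + k' * m w0"
proof -
  define J where "J w = C + k * w + k' * m w" for w
  have "k' * m w \<le> 0" for w
    using nonpos \<open>0 < k\<close> \<open>k < k'\<close> by (simp add: mult_nonneg_nonpos)
  then have below_bot: "\<forall>w. J w \<le> C + k * w"
    unfolding J_def by (smt (verit))
  have "filterlim (\<lambda>w. C + k * w) at_bot at_bot"
    using \<open>0 < k\<close> by real_asymp
  then have bot: "filterlim J at_bot at_bot"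
    using below_bot by (rule filterlim_at_bot_mono[OF _ always_eventually])
  define d where "d = k' - k"
  have "k' * m w \<le> k' * (E - w)" for w
    using below_shift \<open>0 < k\<close> \<open>k < k'\<close> by (simp add: mult_left_mono)
  then have below_top: "\<forall>w. J w \<le> C + k' * E - d * w"
    unfolding J_def d_def by (smt (verit) right_diff_distrib left_diff_distrib)
  have "d > 0"
    using \<open>k < k'\<close> by (simp add: d_def)
  then have "filterlim (\<lambda>w. C + k' * E - d * w) at_bot at_top"
    by real_asymp
  then have top: "filterlim J at_bot at_top"
    using below_top by (rule filterlim_at_bot_mono[OF _ always_eventually])
  have "continuous_on UNIV J"
    unfolding J_def by (intro continuous_intros cont)
  then show ?thesis
    using continuous_attains_sup_at_bot_at_top[OF _ top bot] by (simp add: J_def)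
qed

context prob_space
begin

lemma integrable_min_diff:
  fixes X :: "'a \<Rightarrow> real"
  assumes "integrable M X"
  shows "integrable M (\<lambda>x. min (X x - w) 0)"
  using assms by auto

lemma integral_min_diff_le:
  fixes X :: "'a \<Rightarrow> real"
  assumes "integrable M X"
  shows "(\<integral>x. min (X x - w) 0 \<partial>M) \<le> expectation X - w"
proof -
  have "(\<integral>x. min (X x - w) 0 \<partial>M) \<le> (\<integral>x. X x - w \<partial>M)"
    using assms integrable_min_diff by (intro integral_mono) auto
  also have "\<dots> = expectation X - w" using assms by (simp add: prob_space)
  finally show ?thesis .
qed

lemma integral_min_diff_nonpos:
  fixes X :: "'a \<Rightarrow> real"
  assumes "integrable M X"
  shows "(\<integral>x. min (X x - w) 0 \<partial>M) \<le> 0"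
  using integral_mono[OF integrable_min_diff[OF assms] integrable_zero] by simp

lemma lipschitz_integral_min_diff:
  fixes X :: "'a \<Rightarrow> real"
  assumes "integrable M X"
  shows "1-lipschitz_on UNIV (\<lambda>w. \<integral>x. min (X x - w) 0 \<partial>M)"
proof (rule lipschitz_onI)
  fix w w' :: real
  note integrable = integrable_min_diff[OF assms]
  have "dist (\<integral>x. min (X x - w) 0 \<partial>M) (\<integral>x. min (X x - w') 0 \<partial>M)
      = \<bar>\<integral>x. min (X x - w) 0 - min (X x - w') 0 \<partial>M\<bar>"
    using integrable by (simp add: dist_real_def)
  also have "\<dots> \<le> (\<integral>x. \<bar>min (X x - w) 0 - min (X x - w') 0\<bar> \<partial>M)"
    by (rule integral_abs_bound)
  also have "\<dots> \<le> (\<integral>x. \<bar>w - w'\<bar> \<partial>M)"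
  proof (rule integral_mono)
    show "integrable M (\<lambda>x. \<bar>min (X x - w) 0 - min (X x - w') 0\<bar>)"
      using integrable by auto
    show "\<bar>min (X x - w) 0 - min (X x - w') 0\<bar> \<le> \<bar>w - w'\<bar>" for x
      by (simp add: min_def abs_if)
  qed simp
  finally show "dist (\<integral>x. min (X x - w) 0 \<partial>M) (\<integral>x. min (X x - w') 0 \<partial>M) \<le> 1 * dist w w'"
    by (simp add: prob_space dist_real_def)
qed simp

lemma EW_LS_obj_eq:
  assumes "\<And>i. i \<le> Mn \<Longrightarrow> integrable M (q c i)" and "integrable M (WT c)"
  shows "EW_LS_obj M q Mn WT eps W kh c
    = (\<integral>x. (\<Sum>i\<le>Mn. q c i x) + eps * WT c x \<partial>M) + kh * (\<integral>x. min (WT c x - W) 0 \<partial>M)"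
proof -
  have "EW_LS_obj M q Mn WT eps W kh c
      = (\<integral>x. ((\<Sum>i\<le>Mn. q c i x) + eps * WT c x) + kh * min (WT c x - W) 0 \<partial>M)"
    unfolding EW_LS_obj_def by (intro arg_cong[where f="integral\<^sup>L M"] ext) simp
  also have "\<dots> = (\<integral>x. (\<Sum>i\<le>Mn. q c i x) + eps * WT c x \<partial>M)
      + (\<integral>x. kh * min (WT c x - W) 0 \<partial>M)"
    using assms integrable_min_diff
    by (intro Bochner_Integration.integral_add Bochner_Integration.integrable_add integrable_sum
        integrable_mult_right) auto
  finally show ?thesis by simp
qed

lemma EW_ES_J_eq_EW_LS_obj:
  assumes "\<And>i. i \<le> Mn \<Longrightarrow> integrable M (q c i)" and "integrable M (WT c)"
  shows "EW_ES_J M q Mn WT eps alpha kappa c W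
    = EW_LS_obj M q Mn WT eps W (kappa / alpha) c + kappa * W"
proof -
  have "integrable M (\<lambda>x. (\<Sum>i\<le>Mn. q c i x) + kappa / alpha * min (WT c x - W) 0 + eps * WT c x)"
    using assms integrable_min_diff
    by (intro Bochner_Integration.integrable_add integrable_sum integrable_mult_right) auto
  then show ?thesis
    unfolding EW_ES_J_def EW_LS_obj_def by (simp add: algebra_simps prob_space)
qed

lemma EW_ES_J_eq:
  assumes "\<And>i. i \<le> Mn \<Longrightarrow> integrable M (q c i)" and "integrable M (WT c)"
  shows "EW_ES_J M q Mn WT eps alpha kappa c W
    = (\<integral>x. (\<Sum>i\<le>Mn. q c i x) + eps * WT c x \<partial>M) + kappa * W
      + (kappa / alpha) * (\<integral>x. min (WT c x - W) 0 \<partial>M)"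
  using assms by (simp add: EW_ES_J_eq_EW_LS_obj EW_LS_obj_eq)

lemma EW_ES_J_attains_sup:
  assumes "\<And>i. i \<le> Mn \<Longrightarrow> integrable M (q c i)" and WT: "integrable M (WT c)"
    and "0 < alpha" "alpha < 1" "0 < kappa"
  shows "\<exists>W0. \<forall>W. EW_ES_J M q Mn WT eps alpha kappa c W \<le> EW_ES_J M q Mn WT eps alpha kappa c W0"
proof -
  define C where "C = (\<integral>x. (\<Sum>i\<le>Mn. q c i x) + eps * WT c x \<partial>M)"
  define m where "m W = (\<integral>x. min (WT c x - W) 0 \<partial>M)" for W
  have "continuous_on UNIV m"
    unfolding m_def using lipschitz_integral_min_diff[OF WT] by (rule lipschitz_on_continuous_on)
  moreover have "\<forall>W. m W \<le> 0" "\<forall>W. m W \<le> expectation (WT c) - W"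
    unfolding m_def using WT integral_min_diff_nonpos integral_min_diff_le by auto
  moreover have "kappa < kappa / alpha"
    using assms by (simp add: field_simps)
  ultimately obtain W0
    where "\<forall>W. C + kappa * W + (kappa / alpha) * m W \<le> C + kappa * W0 + (kappa / alpha) * m W0"
    using affine_plus_shortfall_attains_sup[OF _ _ _ \<open>0 < kappa\<close>] by blast
  then show ?thesis
    using assms(1) WT by (auto simp: EW_ES_J_eq C_def m_def)
qed
end

theorem proposition1:
  fixes A :: "'c set" and M :: "'w measure"
    and q :: "'c \<Rightarrow> nat \<Rightarrow> 'w \<Rightarrow> real" and WT :: "'c \<Rightarrow> 'w \<Rightarrow> real"
    and Mn :: nat and eps alpha kappa Wstar :: real
  assumes "prob_space M"
    and "\<And>c i. c \<in> A \<Longrightarrow> i \<le> Mn \<Longrightarrow> integrable M (q c i)"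
    and "\<And>c. c \<in> A \<Longrightarrow> integrable M (WT c)"
    and "0 < alpha" "alpha < 1" "0 < kappa"
    and Wstar_max: "\<And>W'. EW_ES_value_at A M q Mn WT eps alpha kappa W'
                        \<le> EW_ES_value_at A M q Mn WT eps alpha kappa Wstar"
    and Wstar_unique: "\<And>W'. EW_ES_value_at A M q Mn WT eps alpha kappa W'
                        = EW_ES_value_at A M q Mn WT eps alpha kappa Wstar \<Longrightarrow> W' = Wstar"
  shows "(\<forall>P. solves_EW_ES A M q Mn WT eps alpha kappa P
              \<longrightarrow> solves_EW_LS A M q Mn WT eps Wstar (kappa / alpha) P)
       \<and> (\<forall>P. solves_EW_LS A M q Mn WT eps Wstar (kappa / alpha) P
              \<longrightarrow> solves_EW_ES A M q Mn WT eps alpha kappa P)"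
proof -
  interpret prob_space M by fact
  define f where "f c W = ereal (EW_ES_J M q Mn WT eps alpha kappa c W)" for c W
  have ES_obj: "EW_ES_obj M q Mn WT eps alpha kappa c = (SUP W. f c W)" for c
    unfolding EW_ES_obj_def f_def ..
  have peak: "EW_ES_value_at A M q Mn WT eps alpha kappa W = (SUP c\<in>A. f c W)" for W
    unfolding EW_ES_value_at_def f_def ..
  have solves_LS: "solves_EW_LS A M q Mn WT eps Wstar (kappa / alpha) P
      \<longleftrightarrow> P \<in> A \<and> (\<forall>c\<in>A. f c Wstar \<le> f P Wstar)" for P
    unfolding solves_EW_LS_def f_def using assms(2,3)
    by (auto simp: EW_ES_J_eq_EW_LS_obj)
  have solves_ES: "solves_EW_ES A M q Mn WT eps alpha kappa P
      \<longleftrightarrow> P \<in> A \<and> (\<forall>c\<in>A. (SUP W. f c W) \<le> (SUP W. f P W))" for P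
    unfolding solves_EW_ES_def ES_obj ..
  have attains: "\<exists>W0. \<forall>W. f P W \<le> f P W0" if "P \<in> A" for P
    using EW_ES_J_attains_sup[of Mn q P WT alpha kappa eps] assms(2-6) that
    by (simp add: f_def)
  show ?thesis
    unfolding solves_LS solves_ES
  proof (rule conjI; intro allI impI)
    fix P assume P: "P \<in> A \<and> (\<forall>c\<in>A. (SUP W. f c W) \<le> (SUP W. f P W))"
    then obtain W0 where "\<forall>W. f P W \<le> f P W0" using attains by blast
    with P show "P \<in> A \<and> (\<forall>c\<in>A. f c Wstar \<le> f P Wstar)"
      using maximizer_of_SUP_maximizes_at_unique_peak[of P A f W0 Wstar] Wstar_max Wstar_unique
      unfolding peak by blast
  next
    fix P assume "P \<in> A \<and> (\<forall>c\<in>A. f c Wstar \<le> f P Wstar)"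
    then show "P \<in> A \<and> (\<forall>c\<in>A. (SUP W. f c W) \<le> (SUP W. f P W))"
      using maximizer_at_peak_maximizes_SUP[of A f Wstar P] Wstar_max
      unfolding peak by blast
  qed
qed

end
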